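(* Let $\Omega\subset\mathbb R^d$ be a $d$-dimensional convex body contained in a ball of radius $R$, let $\mu$ be the uniform probability measure on $\Omega$, and let $\alpha$ be in the $\eta$-interior of $\Omega$ (i.e., the open ball of radius $\eta$ about $\alpha$ lies in $\Omega$). Then the minimizer $y^\star\in\mathbb R^d$ of $F_\alpha(y)=\langle y,\alpha\rangle+\log\int_\Omega e^{-\langle y,x\rangle}d\mu(x)$ satisfies $\|y^\star\|\le\frac{2d}{\eta}\log\frac{4R}{\eta}$.
   Context: The uniform probability measure is normalized Lebesgue measure restricted to $\Omega$; $\langle\cdot,\cdot\rangle$ and $\|\cdot\|$ are Euclidean. *)

theory Defs
  imports "HOL-Probability.Probability"
begin

definition unif :: "'a::euclidean_space set \<Rightarrow> 'a measure" where
  "unif \<Omega> = uniform_measure lborel \<Omega>"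

definition Falpha :: "'a::euclidean_space set \<Rightarrow> 'a \<Rightarrow> 'a \<Rightarrow> real" where
  "Falpha \<Omega> \<alpha> y = y \<bullet> \<alpha> + ln (\<integral>x. exp (- (y \<bullet> x)) \<partial>(unif \<Omega>))"

definition convex_body :: "'a::euclidean_space set \<Rightarrow> bool" where
  "convex_body \<Omega> \<longleftrightarrow> compact \<Omega> \<and> convex \<Omega> \<and> interior \<Omega> \<noteq> {}"

end

theory Submission
  imports Defs
begin

text \<open>Since \<open>\<mu>\<close> is a probability measure, \<open>F\<^sub>\<alpha>(0) = 0\<close>, so the minimizer satisfies
  \<open>\<integral> exp \<langle>y, \<alpha> - x\<rangle> d\<mu> \<le> 1\<close>. On the ball of radius \<open>\<eta>/4\<close> centred at \<open>\<alpha> - (3\<eta>/4) y/\<parallel>y\<parallel>\<close>,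
  which lies in \<open>\<Omega>\<close>, the integrand is at least \<open>exp (\<parallel>y\<parallel> \<eta>/2)\<close>, and this ball has
  \<open>\<mu>\<close>-measure at least \<open>(\<eta>/4R)\<^sup>d\<close> by comparing volumes with the ball of radius \<open>R\<close>
  containing \<open>\<Omega>\<close>. Hence \<open>exp (\<parallel>y\<parallel> \<eta>/2) (\<eta>/4R)\<^sup>d \<le> 1\<close>.\<close>

lemma radius_le_of_ball_subset_cball:
  fixes a c :: "'a::euclidean_space"
  assumes "ball a r \<subseteq> cball c R" "0 < r"
  shows "r \<le> R"
proof -
  have "dist a c + r \<le> R"
    using assms by (simp add: ball_subset_cball_iff)
  then show ?thesis
    using zero_le_dist[of a c] by linarith
qed

lemma prob_space_unif:
  fixes \<Omega> :: "'a::euclidean_space set"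
  assumes "\<Omega> \<in> sets lborel" "bounded \<Omega>" "ball a r \<subseteq> \<Omega>" "0 < r"
  shows "prob_space (unif \<Omega>)"
proof -
  have "0 < emeasure lborel (ball a r)"
    using \<open>0 < r\<close> by (simp add: emeasure_ball)
  also have "\<dots> \<le> emeasure lborel \<Omega>"
    using assms(1,3) by (intro emeasure_mono) auto
  finally have "emeasure lborel \<Omega> \<noteq> 0" by simp
  moreover have "emeasure lborel \<Omega> \<noteq> \<infinity>"
    using emeasure_bounded_finite[OF \<open>bounded \<Omega>\<close>] by simp
  ultimately show ?thesis
    unfolding unif_def by (rule prob_space_uniform_measure)
qed

lemma measure_unif_ball_ge:
  fixes \<Omega> :: "'a::euclidean_space set"
  assumes "\<Omega> \<in> sets lborel" "ball a r \<subseteq> \<Omega>" "\<Omega> \<subseteq> cball c R" "0 < r"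
  shows "(r / R) ^ DIM('a) \<le> measure (unif \<Omega>) (ball a r)"
proof -
  define V where "V = unit_ball_vol (real DIM('a))"
  have "V > 0" unfolding V_def by simp
  have "ball a r \<subseteq> cball c R"
    using assms(2,3) by blast
  with \<open>0 < r\<close> have "0 < R"
    using radius_le_of_ball_subset_cball by fastforce
  have fin: "emeasure lborel \<Omega> < \<infinity>"
    using assms(3) bounded_cball bounded_subset emeasure_bounded_finite by blast
  have ball_vol: "measure lborel (ball a r) = V * r ^ DIM('a)"
    using \<open>0 < r\<close> by (simp add: content_ball V_def)
  have lower: "V * r ^ DIM('a) \<le> measure lborel \<Omega>"
    unfolding ball_vol[symmetric]
    using assms(1,2) fin by (intro measure_mono_fmeasurable) (auto simp: fmeasurable_def)
  have "measure lborel \<Omega> \<le> measure lborel (cball c R)"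
    using assms(1,3) emeasure_bounded_finite[OF bounded_cball]
    by (intro measure_mono_fmeasurable) (auto simp: fmeasurable_def)
  also have "\<dots> = V * R ^ DIM('a)"
    using \<open>0 < R\<close> by (simp add: content_cball V_def)
  finally have upper: "measure lborel \<Omega> \<le> V * R ^ DIM('a)" .
  have pos: "0 < measure lborel \<Omega>"
    using lower \<open>V > 0\<close> \<open>0 < r\<close> by (smt (verit) mult_pos_pos zero_less_power)
  have "(r / R) ^ DIM('a) = V * r ^ DIM('a) / (V * R ^ DIM('a))"
    using \<open>V > 0\<close> by (simp add: power_divide)
  also have "\<dots> \<le> V * r ^ DIM('a) / measure lborel \<Omega>"
    using upper pos \<open>V > 0\<close> \<open>0 < r\<close> by (intro divide_left_mono) auto
  also have "\<dots> = measure (unif \<Omega>) (ball a r)"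
    using pos fin assms(2) unfolding unif_def
    by (subst measure_uniform_measure) (auto simp: Int_absorb1 ball_vol measure_def[of _ \<Omega>])
  finally show ?thesis .
qed

lemma integrable_unif_exp_inner:
  fixes \<Omega> :: "'a::euclidean_space set"
  assumes "prob_space (unif \<Omega>)" "\<Omega> \<in> sets lborel" "bounded \<Omega>"
  shows "integrable (unif \<Omega>) (\<lambda>x. exp (- (y \<bullet> x)))"
proof -
  obtain B where B: "\<forall>x\<in>\<Omega>. norm x \<le> B"
    using \<open>bounded \<Omega>\<close> by (auto simp: bounded_iff)
  interpret prob_space "unif \<Omega>" by (fact assms(1))
  show ?thesis
  proof (rule integrable_const_bound[where B = "exp (norm y * B)"])
    show "AE x in unif \<Omega>. norm (exp (- (y \<bullet> x))) \<le> exp (norm y * B)"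
      unfolding unif_def
    proof (rule AE_uniform_measureI[OF assms(2)], intro AE_I2 impI)
      fix x assume "x \<in> \<Omega>"
      then have "- (y \<bullet> x) \<le> norm y * B"
        using B norm_cauchy_schwarz[of "- y" x] mult_left_mono[of "norm x" B "norm y"] by auto
      then show "norm (exp (- (y \<bullet> x))) \<le> exp (norm y * B)" by simp
    qed
  qed (simp add: unif_def)
qed

lemma Falpha_zero:
  assumes "prob_space (unif \<Omega>)"
  shows "Falpha \<Omega> \<alpha> 0 = 0"
  using prob_space.prob_space[OF assms] by (simp add: Falpha_def)

lemma exp_inner_mult_integral_le_one:
  assumes "Falpha \<Omega> \<alpha> y \<le> 0" "0 < (\<integral>x. exp (- (y \<bullet> x)) \<partial>unif \<Omega>)"
  shows "exp (y \<bullet> \<alpha>) * (\<integral>x. exp (- (y \<bullet> x)) \<partial>unif \<Omega>) \<le> 1"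
proof -
  have "ln (exp (y \<bullet> \<alpha>) * (\<integral>x. exp (- (y \<bullet> x)) \<partial>unif \<Omega>)) \<le> 0"
    using assms by (simp add: ln_mult Falpha_def)
  then show ?thesis
    using assms(2) by (simp add: ln_le_zero_iff)
qed

lemma measure_mult_le_integral:
  fixes f :: "'a \<Rightarrow> real"
  assumes "finite_measure M" "integrable M f" "\<And>x. 0 \<le> f x"
    and "S \<in> sets M" "\<And>x. x \<in> S \<Longrightarrow> K \<le> f x" "0 < K"
  shows "K * measure M S \<le> integral\<^sup>L M f"
proof -
  have [measurable]: "f \<in> borel_measurable M"
    using assms(2) by (rule borel_measurable_integrable)
  have "measure M S \<le> measure M {x \<in> space M. K \<le> f x}"
    using assms(4,5) sets.sets_into_space[OF assms(4)]
    by (intro finite_measure.finite_measure_mono[OF assms(1)]) auto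
  also have "\<dots> \<le> integral\<^sup>L M f / K"
    using assms by (intro integral_Markov_inequality_measure[where A = S]) auto
  finally show ?thesis
    using \<open>0 < K\<close> by (simp add: field_simps)
qed

lemma inner_ge_on_ball_against_sgn:
  fixes a x y :: "'a::real_inner"
  assumes "x \<in> ball (a - s *\<^sub>R sgn y) r"
  shows "norm y * (s - r) \<le> y \<bullet> (a - x)"
proof -
  define b where "b = a - s *\<^sub>R sgn y"
  have "- (y \<bullet> (b - x)) \<le> norm y * norm (b - x)"
    using norm_cauchy_schwarz[of "- y" "b - x"] by simp
  also have "\<dots> \<le> norm y * r"
    using assms by (intro mult_left_mono) (auto simp: b_def dist_norm)
  finally have "- (norm y * r) \<le> y \<bullet> (b - x)" by simp
  moreover have "y \<bullet> (a - x) = y \<bullet> (b - x) + s * norm y"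
    by (cases "y = 0") (simp_all add: b_def inner_diff_right sgn_div_norm dot_square_norm power2_eq_square)
  ultimately show ?thesis by (simp add: algebra_simps)
qed

lemma le_ln_of_exp_mult_power_le_one:
  fixes t \<eta> q :: real
  assumes "0 < \<eta>" "0 < q" "exp (t * \<eta> / 2) * q ^ d \<le> 1"
  shows "t \<le> (2 * real d / \<eta>) * ln (1 / q)"
proof -
  have "ln (exp (t * \<eta> / 2) * q ^ d) \<le> 0"
    using assms by (subst ln_le_zero_iff) auto
  then have "t * \<eta> / 2 \<le> real d * ln (1 / q)"
    using \<open>0 < q\<close> by (simp add: ln_mult ln_realpow ln_div)
  then show ?thesis
    using \<open>0 < \<eta>\<close> by (simp add: field_simps)
qed

lemma integral_unif_exp_inner_ge:
  fixes \<Omega> :: "'a::euclidean_space set"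
  assumes "\<Omega> \<in> sets lborel" "\<Omega> \<subseteq> cball c R" "ball \<alpha> \<eta> \<subseteq> \<Omega>" "0 < \<eta>"
  shows "exp (norm y * \<eta> / 2 - y \<bullet> \<alpha>) * (\<eta> / (4 * R)) ^ DIM('a)
           \<le> (\<integral>x. exp (- (y \<bullet> x)) \<partial>unif \<Omega>)"
proof -
  have "bounded \<Omega>"
    using assms(2) bounded_cball bounded_subset by blast
  have P: "prob_space (unif \<Omega>)"
    using prob_space_unif[OF assms(1) \<open>bounded \<Omega>\<close> assms(3,4)] .
  define K where "K = exp (norm y * \<eta> / 2 - y \<bullet> \<alpha>)"
  \<comment> \<open>Using \<open>sgn y\<close> rather than \<open>y / norm y\<close> keeps \<open>y = 0\<close> in the same argument.\<close>
  define S where "S = ball (\<alpha> - (3 * \<eta> / 4) *\<^sub>R sgn y) (\<eta> / 4)"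
  have "dist (\<alpha> - (3 * \<eta> / 4) *\<^sub>R sgn y) \<alpha> + \<eta> / 4 \<le> \<eta>"
    using assms(4) by (simp add: dist_norm norm_sgn)
  then have "S \<subseteq> ball \<alpha> \<eta>"
    by (simp add: S_def ball_subset_ball_iff)
  with assms(3) have "(\<eta> / (4 * R)) ^ DIM('a) \<le> measure (unif \<Omega>) S"
    using measure_unif_ball_ge[OF assms(1) _ assms(2), of "\<alpha> - (3 * \<eta> / 4) *\<^sub>R sgn y" "\<eta> / 4"] assms(4)
    by (auto simp: S_def)
  moreover have "K * measure (unif \<Omega>) S \<le> (\<integral>x. exp (- (y \<bullet> x)) \<partial>unif \<Omega>)"
  proof (rule measure_mult_le_integral)
    fix x assume "x \<in> S"
    then have "norm y * \<eta> / 2 \<le> y \<bullet> (\<alpha> - x)"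
      using inner_ge_on_ball_against_sgn[of x \<alpha> "3 * \<eta> / 4" y "\<eta> / 4"] by (simp add: S_def)
    then show "K \<le> exp (- (y \<bullet> x))"
      by (simp add: K_def inner_diff_right)
  qed (use P integrable_unif_exp_inner[OF P assms(1) \<open>bounded \<Omega>\<close>] in
       \<open>auto simp: S_def K_def prob_space_def unif_def\<close>)
  ultimately show ?thesis
    unfolding K_def by (smt (verit) exp_gt_zero mult_left_mono)
qed

theorem mainTheorem6:
  fixes \<Omega> :: "'a::euclidean_space set" and c \<alpha> y :: 'a and R \<eta> :: real
  assumes "convex_body \<Omega>"
    and "\<Omega> \<subseteq> cball c R"
    and "\<eta> > 0"
    and "ball \<alpha> \<eta> \<subseteq> \<Omega>"
    and "\<forall>z. Falpha \<Omega> \<alpha> y \<le> Falpha \<Omega> \<alpha> z"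
  shows "norm y \<le> (2 * real DIM('a) / \<eta>) * ln (4 * R / \<eta>)"
proof -
  have \<Omega>: "\<Omega> \<in> sets lborel" "bounded \<Omega>"
    using assms(1) by (auto simp: convex_body_def compact_imp_closed compact_imp_bounded)
  have "ball \<alpha> \<eta> \<subseteq> cball c R"
    using assms(2,4) by blast
  with assms(3) have "0 < R"
    using radius_le_of_ball_subset_cball by fastforce
  define I where "I = (\<integral>x. exp (- (y \<bullet> x)) \<partial>unif \<Omega>)"
  define q where "q = \<eta> / (4 * R)"
  have lower: "exp (norm y * \<eta> / 2 - y \<bullet> \<alpha>) * q ^ DIM('a) \<le> I"
    unfolding I_def q_def using integral_unif_exp_inner_ge[OF \<Omega>(1) assms(2,4,3)] .
  moreover have "0 < exp (norm y * \<eta> / 2 - y \<bullet> \<alpha>) * q ^ DIM('a)"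
    using \<open>0 < R\<close> assms(3) by (simp add: q_def)
  moreover have "Falpha \<Omega> \<alpha> y \<le> 0"
    using assms(5) Falpha_zero[OF prob_space_unif[OF \<Omega> assms(4,3)]] by metis
  ultimately have "exp (y \<bullet> \<alpha>) * I \<le> 1"
    using exp_inner_mult_integral_le_one unfolding I_def by (metis order_less_le_trans)
  then have "exp (y \<bullet> \<alpha>) * (exp (norm y * \<eta> / 2 - y \<bullet> \<alpha>) * q ^ DIM('a)) \<le> 1"
    using lower by (smt (verit) exp_gt_zero mult_left_mono)
  then have "exp (norm y * \<eta> / 2) * q ^ DIM('a) \<le> 1"
    by (simp add: exp_diff)
  then have "norm y \<le> (2 * real DIM('a) / \<eta>) * ln (1 / q)"
    using \<open>0 < R\<close> assms(3) by (intro le_ln_of_exp_mult_power_le_one) (simp_all add: q_def)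
  then show ?thesis
    by (simp add: q_def)
qed

end
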